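(* Let $H$ be a separable complex Hilbert space and $X$ a locally compact space with positive Borel measure $\mu$, and assume $F\subset J_1:=L^1(X,H)$, with norm $\|f\|_{J_1}=\int_X\|f(x)\|_H\,d\mu(x)$. Suppose the map $\sigma:F_0\to\overline{F}_0$ is continuous in the topology of $J_1$. Then the map $U:F_0\to U(H)$ is continuous from the topology of $J_1$ to the operator norm topology.
   Context: A frame on $H$ is a map $f:X\to H$ such that $x\mapsto\langle\phi,f(x)\rangle$ is measurable for every $\phi\in H$ and there exist $0<A\le B$ with $A\|\phi\|^2\le\int_X|\langle\phi,f(x)\rangle|^2d\mu(x)\le B\|\phi\|^2$ for all $\phi$; it is Parseval if $A=B=1$. $U(H)$ is the unitary group. $F$ is the set of frames $f$ with $\sup_x\|f(x)\|_H<\infty$, $F_0$ the Parseval ones; $(Af)(x)=A[f(x)]$. $\overline{F}_0\subset F_0$ is a fixed transversal of $F_0/U(H)$ (exactly one element from each orbit $\{Vf:V\in U(H)\}$); each $f\in F_0$ factors uniquely as $f=U(f)\sigma(f)$ with $U(f)\in U(H)$ and $\sigma(f)\in\overline{F}_0$, defining the maps $U$ and $\sigma$. *)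

theory Defs
  imports "HOL-Analysis.Analysis"
begin

class complex_vector = real_vector +
  fixes scaleC :: "complex \<Rightarrow> 'a \<Rightarrow> 'a" (infixr \<open>*\<^sub>C\<close> 75)
  assumes scaleC_add_right: "a *\<^sub>C (x + y) = a *\<^sub>C x + a *\<^sub>C y"
    and scaleC_add_left: "(a + b) *\<^sub>C x = a *\<^sub>C x + b *\<^sub>C x"
    and scaleC_scaleC: "a *\<^sub>C (b *\<^sub>C x) = (a * b) *\<^sub>C x"
    and scaleC_one: "1 *\<^sub>C x = x"
    and scaleR_scaleC: "scaleR r x = complex_of_real r *\<^sub>C x"

class complex_inner = complex_vector + real_normed_vector +
  fixes cinner :: "'a \<Rightarrow> 'a \<Rightarrow> complex"
  assumes cinner_commute: "cinner x y = cnj (cinner y x)"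
    and cinner_add_left: "cinner (x + y) z = cinner x z + cinner y z"
    and cinner_scaleC_left: "cinner (r *\<^sub>C x) y = cnj r * cinner x y"
    and cinner_self_real: "Im (cinner x x) = 0"
    and cinner_self_nonneg: "0 \<le> Re (cinner x x)"
    and cinner_self_eq_0: "cinner x x = 0 \<longleftrightarrow> x = 0"
    and norm_eq_sqrt_cinner: "norm x = sqrt (Re (cinner x x))"

class chilbert_space = complex_inner + complete_space

subclass (in chilbert_space) banach ..

definition clinear :: "('a::complex_vector \<Rightarrow> 'b::complex_vector) \<Rightarrow> bool" where
  "clinear V \<longleftrightarrow> (\<forall>x y. V (x + y) = V x + V y) \<and> (\<forall>c x. V (c *\<^sub>C x) = c *\<^sub>C V x)"

definition unitary :: "('h::complex_inner \<Rightarrow> 'h) \<Rightarrow> bool" where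
  "unitary V \<longleftrightarrow> clinear V \<and> surj V \<and> (\<forall>x y. cinner (V x) (V y) = cinner x y)"

definition frame_with_bounds ::
  "'x measure \<Rightarrow> ('x \<Rightarrow> 'h::complex_inner) \<Rightarrow> real \<Rightarrow> real \<Rightarrow> bool" where
  "frame_with_bounds M f A B \<longleftrightarrow>
     0 < A \<and> A \<le> B \<and>
     (\<forall>\<phi>. (\<lambda>x. cinner \<phi> (f x)) \<in> borel_measurable M) \<and>
     (\<forall>\<phi>. ennreal (A * (norm \<phi>)\<^sup>2) \<le> (\<integral>\<^sup>+ x. ennreal ((cmod (cinner \<phi> (f x)))\<^sup>2) \<partial>M)
        \<and> (\<integral>\<^sup>+ x. ennreal ((cmod (cinner \<phi> (f x)))\<^sup>2) \<partial>M) \<le> ennreal (B * (norm \<phi>)\<^sup>2))"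

definition is_frame :: "'x measure \<Rightarrow> ('x \<Rightarrow> 'h::complex_inner) \<Rightarrow> bool" where
  "is_frame M f \<longleftrightarrow> (\<exists>A B. frame_with_bounds M f A B)"

definition is_parseval_frame :: "'x measure \<Rightarrow> ('x \<Rightarrow> 'h::complex_inner) \<Rightarrow> bool" where
  "is_parseval_frame M f \<longleftrightarrow> frame_with_bounds M f 1 1"

definition bounded_frames :: "'x measure \<Rightarrow> ('x \<Rightarrow> 'h::complex_inner) set" where
  "bounded_frames M = {f. is_frame M f \<and> (\<exists>C. \<forall>x\<in>space M. norm (f x) \<le> C)}"

definition parseval_bounded_frames :: "'x measure \<Rightarrow> ('x \<Rightarrow> 'h::complex_inner) set" where
  "parseval_bounded_frames M = {f \<in> bounded_frames M. is_parseval_frame M f}"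

definition J1_dist :: "'x measure \<Rightarrow> ('x \<Rightarrow> 'h::{banach,second_countable_topology}) \<Rightarrow> ('x \<Rightarrow> 'h) \<Rightarrow> real" where
  "J1_dist M f g = (\<integral> x. norm (f x - g x) \<partial>M)"

end

theory Submission
  imports Defs
begin

text \<open>
  For Parseval frames the analysis operator is an isometry, so a unitary \<open>V\<close> is recovered
  from a frame \<open>g = V \<circ> g\<^sub>0\<close> through \<open>\<parallel>w\<parallel>\<^sup>2 = \<integral> |\<langle>w, g x\<rangle>|\<^sup>2\<close>.
  Writing \<open>w = U g v - U f v\<close>, one has
  \<open>\<langle>w, g x\<rangle> = \<langle>v, \<sigma> g x - \<sigma> f x\<rangle> - \<langle>U f v, g x - f x\<rangle>\<close>,
  and for two Parseval frames \<open>h\<^sub>1, h\<^sub>2\<close> with \<open>h\<^sub>2\<close> bounded by \<open>C\<close> the pointwise inequality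
  \<open>|a - b|\<^sup>2 + |b|\<^sup>2 \<le> |a|\<^sup>2 + 2|a - b||b|\<close> integrates to
  \<open>\<integral> |\<langle>u, h\<^sub>1 x - h\<^sub>2 x\<rangle>|\<^sup>2 \<le> 2 C \<parallel>u\<parallel>\<^sup>2 \<parallel>h\<^sub>1 - h\<^sub>2\<parallel>\<^sub>J\<^sub>1\<close>.
  Hence \<open>\<parallel>U g - U f\<parallel>\<^sup>2 \<le> 4 C (\<parallel>\<sigma> g - \<sigma> f\<parallel>\<^sub>J\<^sub>1 + \<parallel>g - f\<parallel>\<^sub>J\<^sub>1)\<close>, and continuity of \<open>\<sigma>\<close>
  gives continuity of \<open>U\<close>.
\<close>

lemma cinner_diff_left: "cinner (a - b) z = cinner a z - cinner b z"
  using cinner_add_left[of "a - b" b z] by simp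

lemma cinner_diff_right: "cinner x (a - b) = cinner x a - cinner x b"
  by (metis cinner_commute complex_cnj_diff cinner_diff_left)

lemma cinner_zero_right [simp]: "cinner x 0 = 0"
  using cinner_diff_right[of x 0 0] by simp

lemma cinner_scaleC_right: "cinner x (c *\<^sub>C y) = c * cinner x y"
  by (metis cinner_commute cinner_scaleC_left complex_cnj_cnj complex_cnj_mult)

lemma cinner_self_eq_norm_power2: "cinner x x = complex_of_real ((norm x)\<^sup>2)"
proof -
  have "(norm x)\<^sup>2 = Re (cinner x x)"
    using norm_eq_sqrt_cinner[of x] cinner_self_nonneg[of x] by simp
  then show ?thesis
    using cinner_self_real[of x] by (simp add: complex_eq_iff)
qed

lemma complex_Cauchy_Schwarz_ineq: "cmod (cinner x y) \<le> norm x * norm y"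
proof (cases "y = 0")
  case True
  then show ?thesis by simp
next
  case False
  define a where "a = cinner x y"
  define r where "r = (norm y)\<^sup>2"
  have r_pos: "r > 0" using False unfolding r_def by simp
  \<comment> \<open>expand \<open>0 \<le> \<parallel>x - c y\<parallel>\<^sup>2\<close> with the optimal coefficient \<open>c\<close>\<close>
  define c where "c = cnj a / complex_of_real r"
  have "0 \<le> Re (cinner (x - c *\<^sub>C y) (x - c *\<^sub>C y))" by (rule cinner_self_nonneg)
  also have "cinner (x - c *\<^sub>C y) (x - c *\<^sub>C y)
      = cinner x x - c * a - cnj c * cnj a + cnj c * c * complex_of_real r"
    unfolding a_def r_def
    by (simp add: cinner_diff_left cinner_diff_right cinner_scaleC_right cinner_scaleC_left
        cinner_self_eq_norm_power2[of y] algebra_simps cinner_commute[of y x])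
  also have "Re \<dots> = (norm x)\<^sup>2 - (cmod a)\<^sup>2 / r"
    using r_pos cmod_power2[of a] unfolding c_def
    by (simp add: cinner_self_eq_norm_power2 power2_eq_square field_simps)
  finally have "(cmod a)\<^sup>2 \<le> (norm x * norm y)\<^sup>2"
    using r_pos unfolding r_def by (simp add: field_simps power_mult_distrib)
  then show ?thesis
    unfolding a_def by (meson norm_ge_zero power2_le_imp_le mult_nonneg_nonneg)
qed

lemma unitary_cinner: "unitary V \<Longrightarrow> cinner (V x) (V y) = cinner x y"
  unfolding unitary_def by blast

lemma unitary_norm: "unitary V \<Longrightarrow> norm (V v) = norm v"
  by (metis norm_eq_sqrt_cinner unitary_cinner)

lemma parseval_frame_measurable:
  "is_parseval_frame M h \<Longrightarrow> (\<lambda>x. cinner \<phi> (h x)) \<in> borel_measurable M"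
  unfolding is_parseval_frame_def frame_with_bounds_def by blast

lemma parseval_frame_nn_integral:
  "is_parseval_frame M h \<Longrightarrow>
     (\<integral>\<^sup>+ x. ennreal ((cmod (cinner \<phi> (h x)))\<^sup>2) \<partial>M) = ennreal ((norm \<phi>)\<^sup>2)"
  unfolding is_parseval_frame_def frame_with_bounds_def by (metis antisym mult_1)

lemma parseval_frame_measurable_diff:
  "is_parseval_frame M h\<^sub>1 \<Longrightarrow> is_parseval_frame M h\<^sub>2 \<Longrightarrow>
     (\<lambda>x. cinner \<phi> (h\<^sub>1 x - h\<^sub>2 x)) \<in> borel_measurable M"
  unfolding cinner_diff_right by (intro borel_measurable_diff parseval_frame_measurable)

lemma ennreal_two_mult_add:
  "0 \<le> a \<Longrightarrow> 0 \<le> b \<Longrightarrow> 2 * ennreal a + 2 * ennreal b = ennreal (2 * a + 2 * b)"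
  by (simp add: ennreal_plus ennreal_mult)

lemma J1_dist_nonneg: "0 \<le> J1_dist M f g"
  unfolding J1_dist_def by simp

lemma norm_diff_power2_add_le:
  fixes a b :: "'a::real_normed_vector"
  shows "(norm (a - b))\<^sup>2 + (norm b)\<^sup>2 \<le> (norm a)\<^sup>2 + 2 * norm (a - b) * norm b"
proof -
  have "\<bar>norm (a - b) - norm (- b)\<bar> \<le> norm a"
    using norm_triangle_ineq3[of "a - b" "- b"] by simp
  then have "(norm (a - b) - norm b)\<^sup>2 \<le> (norm a)\<^sup>2"
    using abs_le_square_iff[of "norm (a - b) - norm b" "norm a"] by simp
  then show ?thesis by (simp add: power2_eq_square algebra_simps)
qed

lemma norm_diff_power2_le:
  fixes p q :: "'a::real_normed_vector"
  shows "(norm (p - q))\<^sup>2 \<le> 2 * (norm p)\<^sup>2 + 2 * (norm q)\<^sup>2"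
proof -
  have "(norm (p - q))\<^sup>2 \<le> (norm p + norm q)\<^sup>2"
    by (simp add: power_mono norm_triangle_ineq4)
  also have "\<dots> \<le> 2 * (norm p)\<^sup>2 + 2 * (norm q)\<^sup>2"
    using zero_le_power2[of "norm p - norm q"] unfolding power2_diff power2_sum by linarith
  finally show ?thesis .
qed

lemma nn_integral_cmod_diff_power2_le:
  assumes "a \<in> borel_measurable M" "b \<in> borel_measurable M"
  shows "(\<integral>\<^sup>+ x. ennreal ((cmod (a x - b x))\<^sup>2) \<partial>M)
    \<le> 2 * (\<integral>\<^sup>+ x. ennreal ((cmod (a x))\<^sup>2) \<partial>M) + 2 * (\<integral>\<^sup>+ x. ennreal ((cmod (b x))\<^sup>2) \<partial>M)"
proof -
  have "(\<integral>\<^sup>+ x. ennreal ((cmod (a x - b x))\<^sup>2) \<partial>M)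
      \<le> (\<integral>\<^sup>+ x. 2 * ennreal ((cmod (a x))\<^sup>2) + 2 * ennreal ((cmod (b x))\<^sup>2) \<partial>M)"
  proof (rule nn_integral_mono)
    fix x
    show "ennreal ((cmod (a x - b x))\<^sup>2)
        \<le> 2 * ennreal ((cmod (a x))\<^sup>2) + 2 * ennreal ((cmod (b x))\<^sup>2)"
      using ennreal_leI[OF norm_diff_power2_le[of "a x" "b x"]]
      by (simp add: ennreal_plus ennreal_mult)
  qed
  also have "\<dots> = 2 * (\<integral>\<^sup>+ x. ennreal ((cmod (a x))\<^sup>2) \<partial>M)
      + 2 * (\<integral>\<^sup>+ x. ennreal ((cmod (b x))\<^sup>2) \<partial>M)"
    using assms by (subst nn_integral_add) (auto simp: nn_integral_cmult)
  finally show ?thesis .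
qed

lemma parseval_frames_coefficient_diff_le:
  assumes p1: "is_parseval_frame M h\<^sub>1" and p2: "is_parseval_frame M h\<^sub>2"
    and bound: "\<forall>x\<in>space M. norm (h\<^sub>2 x) \<le> C"
    and int: "integrable M (\<lambda>x. norm (h\<^sub>1 x - h\<^sub>2 x))"
  shows "(\<integral>\<^sup>+ x. ennreal ((cmod (cinner u (h\<^sub>1 x - h\<^sub>2 x)))\<^sup>2) \<partial>M)
     \<le> ennreal (2 * C * (norm u)\<^sup>2 * J1_dist M h\<^sub>1 h\<^sub>2)"
proof -
  define K where "K = 2 * C * (norm u)\<^sup>2"
  let ?d = "\<lambda>x. cmod (cinner u (h\<^sub>1 x - h\<^sub>2 x))"
  have pointwise: "ennreal ((?d x)\<^sup>2) + ennreal ((cmod (cinner u (h\<^sub>2 x)))\<^sup>2)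
      \<le> ennreal ((cmod (cinner u (h\<^sub>1 x)))\<^sup>2) + ennreal K * ennreal (norm (h\<^sub>1 x - h\<^sub>2 x))"
    if x: "x \<in> space M" for x
  proof -
    define a where "a = cinner u (h\<^sub>1 x)"
    define b where "b = cinner u (h\<^sub>2 x)"
    have d: "cinner u (h\<^sub>1 x - h\<^sub>2 x) = a - b"
      unfolding a_def b_def by (rule cinner_diff_right)
    have C_nonneg: "0 \<le> C" using bound x norm_ge_zero order_trans by blast
    have "cmod (a - b) \<le> norm u * norm (h\<^sub>1 x - h\<^sub>2 x)"
      using d complex_Cauchy_Schwarz_ineq by metis
    moreover have "cmod b \<le> norm u * C"
      using complex_Cauchy_Schwarz_ineq[of u "h\<^sub>2 x"] bound x unfolding b_def
      by (meson mult_left_mono norm_ge_zero order_trans)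
    ultimately have "cmod (a - b) * cmod b \<le> (norm u * norm (h\<^sub>1 x - h\<^sub>2 x)) * (norm u * C)"
      by (intro mult_mono) auto
    then have "2 * cmod (a - b) * cmod b \<le> K * norm (h\<^sub>1 x - h\<^sub>2 x)"
      unfolding K_def by (simp add: power2_eq_square mult_ac)
    then have "(cmod (a - b))\<^sup>2 + (cmod b)\<^sup>2 \<le> (cmod a)\<^sup>2 + K * norm (h\<^sub>1 x - h\<^sub>2 x)"
      using norm_diff_power2_add_le[of a b] by linarith
    moreover have "K \<ge> 0" unfolding K_def using C_nonneg by simp
    ultimately show ?thesis unfolding d a_def[symmetric] b_def[symmetric]
      by (simp add: ennreal_plus[symmetric] ennreal_mult[symmetric] del: ennreal_plus)
  qed
  have "(\<integral>\<^sup>+ x. ennreal ((?d x)\<^sup>2) \<partial>M) + ennreal ((norm u)\<^sup>2)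
     = (\<integral>\<^sup>+ x. ennreal ((?d x)\<^sup>2) + ennreal ((cmod (cinner u (h\<^sub>2 x)))\<^sup>2) \<partial>M)"
    using parseval_frame_measurable_diff[OF p1 p2] parseval_frame_measurable[OF p2]
    by (subst nn_integral_add) (auto simp: parseval_frame_nn_integral[OF p2])
  also have "\<dots> \<le> (\<integral>\<^sup>+ x. ennreal ((cmod (cinner u (h\<^sub>1 x)))\<^sup>2)
      + ennreal K * ennreal (norm (h\<^sub>1 x - h\<^sub>2 x)) \<partial>M)"
    by (rule nn_integral_mono) (rule pointwise)
  also have "\<dots> = ennreal ((norm u)\<^sup>2) + ennreal K * ennreal (J1_dist M h\<^sub>1 h\<^sub>2)"
    using parseval_frame_measurable[OF p1] int unfolding J1_dist_def
    by (subst nn_integral_add)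
      (auto simp: parseval_frame_nn_integral[OF p1] nn_integral_cmult nn_integral_eq_integral)
  finally have "(\<integral>\<^sup>+ x. ennreal ((?d x)\<^sup>2) \<partial>M) \<le> ennreal K * ennreal (J1_dist M h\<^sub>1 h\<^sub>2)"
    by (simp add: add.commute ennreal_add_left_cancel_le)
  also have "\<dots> = ennreal (K * J1_dist M h\<^sub>1 h\<^sub>2)"
    by (simp add: ennreal_mult'' J1_dist_nonneg)
  finally show ?thesis unfolding K_def .
qed

lemma unitary_factors_diff_power2_le:
  assumes V: "unitary V" and W: "unitary W"
    and g: "g = V \<circ> g\<^sub>0" and f: "f = W \<circ> f\<^sub>0"
    and pg: "is_parseval_frame M g" and pf: "is_parseval_frame M f"
    and pg\<^sub>0: "is_parseval_frame M g\<^sub>0" and pf\<^sub>0: "is_parseval_frame M f\<^sub>0"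
    and C_nonneg: "0 \<le> C" and f_bound: "\<forall>x\<in>space M. norm (f x) \<le> C"
    and f\<^sub>0_bound: "\<forall>x\<in>space M. norm (f\<^sub>0 x) \<le> C"
    and int: "integrable M (\<lambda>x. norm (g x - f x))"
    and int\<^sub>0: "integrable M (\<lambda>x. norm (g\<^sub>0 x - f\<^sub>0 x))"
  shows "(norm (V v - W v))\<^sup>2 \<le> 4 * C * (J1_dist M g\<^sub>0 f\<^sub>0 + J1_dist M g f) * (norm v)\<^sup>2"
proof -
  define w where "w = V v - W v"
  have coefficients: "cinner w (g x) = cinner v (g\<^sub>0 x - f\<^sub>0 x) - cinner (W v) (g x - f x)" for x
    using unitary_cinner[OF V, of v "g\<^sub>0 x"] unitary_cinner[OF W, of v "f\<^sub>0 x"]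
    unfolding w_def g f by (simp add: cinner_diff_left cinner_diff_right)
  have "ennreal ((norm w)\<^sup>2) = (\<integral>\<^sup>+ x. ennreal ((cmod (cinner w (g x)))\<^sup>2) \<partial>M)"
    using parseval_frame_nn_integral[OF pg] by simp
  also have "\<dots> \<le> 2 * (\<integral>\<^sup>+ x. ennreal ((cmod (cinner v (g\<^sub>0 x - f\<^sub>0 x)))\<^sup>2) \<partial>M)
      + 2 * (\<integral>\<^sup>+ x. ennreal ((cmod (cinner (W v) (g x - f x)))\<^sup>2) \<partial>M)"
    unfolding coefficients
    by (intro nn_integral_cmod_diff_power2_le parseval_frame_measurable_diff pg pf pg\<^sub>0 pf\<^sub>0)
  also have "\<dots> \<le> 2 * ennreal (2 * C * (norm v)\<^sup>2 * J1_dist M g\<^sub>0 f\<^sub>0)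
      + 2 * ennreal (2 * C * (norm v)\<^sup>2 * J1_dist M g f)"
    using parseval_frames_coefficient_diff_le[OF pg\<^sub>0 pf\<^sub>0 f\<^sub>0_bound int\<^sub>0, of v]
      parseval_frames_coefficient_diff_le[OF pg pf f_bound int, of "W v"]
    by (intro add_mono mult_left_mono) (auto simp: unitary_norm[OF W])
  also have "\<dots> = ennreal (2 * (2 * C * (norm v)\<^sup>2 * J1_dist M g\<^sub>0 f\<^sub>0)
      + 2 * (2 * C * (norm v)\<^sup>2 * J1_dist M g f))"
    using C_nonneg J1_dist_nonneg[of M g\<^sub>0 f\<^sub>0] J1_dist_nonneg[of M g f]
    by (intro ennreal_two_mult_add) auto
  also have "\<dots> = ennreal (4 * C * (J1_dist M g\<^sub>0 f\<^sub>0 + J1_dist M g f) * (norm v)\<^sup>2)"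
    by (simp add: algebra_simps)
  finally show ?thesis
    unfolding w_def using C_nonneg by (simp add: ennreal_le_iff J1_dist_nonneg)
qed

lemma onorm_le_sqrt_of_norm_power2_le:
  assumes "0 \<le> B" and "\<And>v. (norm (T v))\<^sup>2 \<le> B * (norm v)\<^sup>2"
  shows "onorm T \<le> sqrt B"
proof (rule onorm_bound)
  fix v
  have "norm (T v) \<le> sqrt (B * (norm v)\<^sup>2)"
    using assms(2)[of v] by (simp add: real_le_rsqrt)
  then show "norm (T v) \<le> sqrt B * norm v"
    by (simp add: real_sqrt_mult)
qed (use assms(1) in simp)

lemma bounded_frames_common_bound:
  assumes "f \<in> bounded_frames M" "g \<in> bounded_frames M"
  obtains C where "0 < C" "\<forall>x\<in>space M. norm (f x) \<le> C" "\<forall>x\<in>space M. norm (g x) \<le> C"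
proof -
  obtain Cf Cg where "\<forall>x\<in>space M. norm (f x) \<le> Cf" "\<forall>x\<in>space M. norm (g x) \<le> Cg"
    using assms unfolding bounded_frames_def by blast
  then show ?thesis
    by (intro that[of "max 1 (max Cf Cg)"]) (auto intro: le_max_iff_disj[THEN iffD2])
qed

lemma integrable_norm_diff_if_frames_integrable:
  fixes f g :: "'x \<Rightarrow> 'h::{chilbert_space, second_countable_topology}"
  assumes "\<forall>h \<in> (bounded_frames M :: ('x \<Rightarrow> 'h) set). integrable M h"
    and "f \<in> parseval_bounded_frames M" "g \<in> parseval_bounded_frames M"
  shows "integrable M (\<lambda>x. norm (g x - f x))"
proof -
  have "integrable M f" "integrable M g"
    using assms unfolding parseval_bounded_frames_def by auto
  then show ?thesis by (intro integrable_norm Bochner_Integration.integrable_diff)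
qed

lemma onorm_unitary_factors_diff_le:
  fixes f g f\<^sub>0 g\<^sub>0 :: "'x \<Rightarrow> 'h::{chilbert_space, second_countable_topology}"
  assumes J1: "\<forall>h \<in> (bounded_frames M :: ('x \<Rightarrow> 'h) set). integrable M h"
    and frames: "f \<in> parseval_bounded_frames M" "g \<in> parseval_bounded_frames M"
      "f\<^sub>0 \<in> parseval_bounded_frames M" "g\<^sub>0 \<in> parseval_bounded_frames M"
    and "unitary V" "unitary W" "g = V \<circ> g\<^sub>0" "f = W \<circ> f\<^sub>0"
    and "0 \<le> C" "\<forall>x\<in>space M. norm (f x) \<le> C" "\<forall>x\<in>space M. norm (f\<^sub>0 x) \<le> C"
  shows "onorm (\<lambda>v. V v - W v) \<le> sqrt (4 * C * (J1_dist M g\<^sub>0 f\<^sub>0 + J1_dist M g f))"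
proof (rule onorm_le_sqrt_of_norm_power2_le)
  show "0 \<le> 4 * C * (J1_dist M g\<^sub>0 f\<^sub>0 + J1_dist M g f)"
    using \<open>0 \<le> C\<close> J1_dist_nonneg[of M g\<^sub>0 f\<^sub>0] J1_dist_nonneg[of M g f] by simp
  have "is_parseval_frame M h" if "h \<in> parseval_bounded_frames M" for h
    using that unfolding parseval_bounded_frames_def by blast
  then show "(norm (V v - W v))\<^sup>2 \<le> 4 * C * (J1_dist M g\<^sub>0 f\<^sub>0 + J1_dist M g f) * (norm v)\<^sup>2" for v
    using frames by (intro unitary_factors_diff_power2_le assms
        integrable_norm_diff_if_frames_integrable[OF J1]) auto
qed

theorem mainTheorem18:
  fixes M :: "'x::topological_space measure"
    and Fbar0 :: "('x \<Rightarrow> 'h::{chilbert_space, second_countable_topology}) set"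
    and U :: "('x \<Rightarrow> 'h) \<Rightarrow> ('h \<Rightarrow> 'h)"
    and \<sigma> :: "('x \<Rightarrow> 'h) \<Rightarrow> ('x \<Rightarrow> 'h)"
  assumes loc_compact: "locally_compact_space (euclidean :: 'x topology)"
    and borel_measure: "sets M = sets borel"
    and F_in_J1: "\<forall>f \<in> (bounded_frames M :: ('x \<Rightarrow> 'h) set). integrable M f"
    and transversal_sub: "Fbar0 \<subseteq> parseval_bounded_frames M"
    and transversal_orbit: "\<forall>f \<in> parseval_bounded_frames M.
          \<exists>!g. g \<in> Fbar0 \<and> (\<exists>V. unitary V \<and> g = V \<circ> f)"
    and factorization: "\<forall>f \<in> parseval_bounded_frames M.
          unitary (U f) \<and> \<sigma> f \<in> Fbar0 \<and> f = U f \<circ> \<sigma> f"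
    and sigma_cont: "\<forall>f \<in> parseval_bounded_frames M. \<forall>e>0. \<exists>d>0.
          \<forall>g \<in> parseval_bounded_frames M. J1_dist M g f < d \<longrightarrow> J1_dist M (\<sigma> g) (\<sigma> f) < e"
  shows "\<forall>f \<in> parseval_bounded_frames M. \<forall>e>0. \<exists>d>0.
          \<forall>g \<in> parseval_bounded_frames M. J1_dist M g f < d \<longrightarrow> onorm (\<lambda>v. U g v - U f v) < e"
proof (intro ballI allI impI)
  let ?P = "parseval_bounded_frames M"
  have bounded: "h \<in> bounded_frames M" and factor: "unitary (U h)" "h = U h \<circ> \<sigma> h"
    and sigma_P: "\<sigma> h \<in> ?P" if "h \<in> ?P" for h
    using that factorization transversal_sub unfolding parseval_bounded_frames_def by auto
  fix f :: "'x \<Rightarrow> 'h" and e :: real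
  assume f: "f \<in> ?P" and e: "e > 0"
  obtain C where C: "0 < C" "\<forall>x\<in>space M. norm (f x) \<le> C" "\<forall>x\<in>space M. norm (\<sigma> f x) \<le> C"
    using bounded_frames_common_bound[OF bounded bounded] f sigma_P by metis
  define \<epsilon> where "\<epsilon> = e\<^sup>2 / (8 * C)"
  have \<epsilon>: "\<epsilon> > 0" "4 * C * (2 * \<epsilon>) = e\<^sup>2" unfolding \<epsilon>_def using e C(1) by auto
  obtain d where d: "d > 0" "\<forall>g \<in> ?P. J1_dist M g f < d \<longrightarrow> J1_dist M (\<sigma> g) (\<sigma> f) < \<epsilon>"
    using sigma_cont f \<epsilon>(1) by blast
  show "\<exists>d>0. \<forall>g \<in> ?P. J1_dist M g f < d \<longrightarrow> onorm (\<lambda>v. U g v - U f v) < e"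
  proof (intro exI[of _ "min d \<epsilon>"] conjI ballI impI)
    fix g assume g: "g \<in> ?P" and close: "J1_dist M g f < min d \<epsilon>"
    let ?B = "4 * C * (J1_dist M (\<sigma> g) (\<sigma> f) + J1_dist M g f)"
    have "onorm (\<lambda>v. U g v - U f v) \<le> sqrt ?B"
      by (intro onorm_unitary_factors_diff_le[OF F_in_J1] f g sigma_P factor C less_imp_le)
    also have "sqrt ?B < e"
    proof -
      have "J1_dist M (\<sigma> g) (\<sigma> f) + J1_dist M g f < 2 * \<epsilon>"
        using d close g by auto
      then have "?B < e\<^sup>2"
        using C(1) \<epsilon>(2) by (metis mult_strict_left_mono zero_less_numeral mult_pos_pos)
      then show ?thesis
        using e by (simp add: real_sqrt_less_iff real_less_lsqrt)
    qed
    finally show "onorm (\<lambda>v. U g v - U f v) < e" .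
  qed (use d \<epsilon> in simp)
qed

end
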